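(* Let $N,L,M\ge1$, $\mathbf{y}^{(1)},\dots,\mathbf{y}^{(L)}\in\mathbb{C}^M$, $\mu_1,\dots,\mu_N\in\mathbb{R}$, $\sigma_1,\dots,\sigma_N>0$, and $c=\exp(2\pi j/(N+1))$. For each slot $i=1,\dots,L$ consider latent variables $T^{(i)}\in\{0,\dots,N\}$ and $\boldsymbol\theta^{(i)}\in(0,1)^N$ with joint density $$p(\mathbf{y}^{(i)},T^{(i)}=m,\boldsymbol\theta^{(i)}\mid\boldsymbol\Phi)=\frac{1}{[2\pi\Sigma_m]^M}\exp\left(-\frac{\|\mathbf{y}^{(i)}\|_2^2}{2\Sigma_m}\right)P(m\mid\boldsymbol\theta^{(i)})\,p(\boldsymbol\theta^{(i)}\mid\mathbf{x}),\qquad \Sigma_m=\sigma_h^2m+\sigma_w^2,$$ where $P(m\mid\boldsymbol\theta)=\frac{1}{N+1}\sum_{\ell=0}^Nc^{-\ell m}\prod_{k=1}^N[1+(c^\ell-1)\theta_k]$ and $$p(\boldsymbol\theta\mid\mathbf{x})=\left(\prod_{n=1}^N\frac{\sigma_n}{\theta_n-\theta_n^2}\right)\frac{1}{(2\pi)^{N/2}\delta^N}\exp\left(-\frac{\sum_{n=1}^N\left(-\sigma_n\log\left(\frac{1}{\theta_n}-1\right)+\mu_n-x_n\right)^2}{2\delta^2}\right).$$ Let $q(T^{(i)})$ be probability mass functions on $\{0,\dots,N\}$ and $q(\theta^{(i)}_n)$ probability densities on $(0,1)$, and let the variational M-step maximize $\sum_{i=1}^L\mathbb{E}_q\left[\log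 p(\mathbf{y}^{(i)},T^{(i)},\boldsymbol\theta^{(i)}\mid\boldsymbol\Phi)\right]$, expectation over $q(T^{(i)})\prod_nq(\theta^{(i)}_n)$, with the dependence on $(\sigma_h^2,\sigma_w^2)$ relaxed to independent variables $\Sigma_0,\dots,\Sigma_N>0$. Assume that for each $m$, $\sum_iq(T^{(i)}=m)\|\mathbf{y}^{(i)}\|_2^2>0$. Then the parameters $\{\mathbf{x},\delta^2,\sigma_h^2,\sigma_w^2\}$ are updated as: $$x_n^*=\mu_n-\frac1L\sum_{i=1}^L\int_0^1q(\theta^{(i)}_n)\,\sigma_n\log\left(\frac{1}{\theta^{(i)}_n}-1\right)d\theta^{(i)}_n,\qquad n=1,\dots,N,$$ $${\delta^2}^*=\frac{1}{LN}\sum_{i=1}^L\sum_{n=1}^N\int_0^1q(\theta^{(i)}_n)\left(-\sigma_n\log\left(\frac{1}{\theta^{(i)}_n}-1\right)+\mu_n-x_n\right)^2d\theta^{(i)}_n,$$ $$\Sigma_m^*=\frac{\sum_{i=1}^Lq(T^{(i)}=m)\|\mathbf{y}^{(i)}\|_2^2}{2M\sum_{i=1}^Lq(T^{(i)}=m)},\qquad m=0,\dots,N,$$ $$(\sigma_h^{2*},\sigma_w^{2*})=\left(\frac{\sum_{m=0}^N(m-\frac N2)(\Sigma_m^*-\bar\Sigma)}{\sum_{m=0}^N(m-\frac N2)^2},\ \bar\Sigma-\frac N2\sigma_h^{2*}\right),$$ where $\bar\Sigma=\frac{1}{N+1}\sum_{m=0}^N\Sigma_m^*$; here $x^*$, ${\delta^2}^*$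 (with $x_n=x_n^*$) and $\Sigma_m^*$ maximize the variational M-step objective, and $(\sigma_h^{2*},\sigma_w^{2*})$ is the least-squares fit of $\Sigma_m^*\approx\sigma_w^2+m\sigma_h^2$.
   Context: $\boldsymbol\Phi=\{\mathbf{x},\delta^2,\sigma_h^2,\sigma_w^2\}$ is the parameter set, with $\mathbf{x}\in\mathbb{R}^N$, $\delta^2,\sigma_h^2,\sigma_w^2>0$. The expectations/integrals involved are assumed finite. *)

theory Defs
  imports "HOL-Probability.Probability"
begin

definition croot :: "nat \<Rightarrow> complex" where
  "croot N = exp (2 * of_real pi * \<i> / of_nat (N + 1))"

text \<open>P(m | theta) = 1/(N+1) sum_l c^(-l m) prod_k [1 + (c^l - 1) theta_k]
  (a real number; we take the real part of the complex expression).\<close>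
definition PT :: "nat \<Rightarrow> nat \<Rightarrow> (nat \<Rightarrow> real) \<Rightarrow> real" where
  "PT N m \<theta> = Re ((1 / of_nat (N + 1)) *
     (\<Sum>l = 0..N. inverse (croot N) ^ (l * m) *
        (\<Prod>k = 1..N. 1 + (croot N ^ l - 1) * of_real (\<theta> k))))"

definition ptheta :: "nat \<Rightarrow> (nat \<Rightarrow> real) \<Rightarrow> (nat \<Rightarrow> real) \<Rightarrow> (nat \<Rightarrow> real)
     \<Rightarrow> real \<Rightarrow> (nat \<Rightarrow> real) \<Rightarrow> real" where
  "ptheta N \<sigma> \<mu> x \<delta>2 \<theta> =
     (\<Prod>n = 1..N. \<sigma> n / (\<theta> n - (\<theta> n)\<^sup>2)) *
     (1 / ((2 * pi) powr (real N / 2) * sqrt \<delta>2 ^ N)) *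
     exp (- (\<Sum>n = 1..N. (- \<sigma> n * ln (1 / \<theta> n - 1) + \<mu> n - x n)\<^sup>2) / (2 * \<delta>2))"

text \<open>Log of the joint density p(y, T = m, theta | Phi), with Sigma_m relaxed to
  independent variables \<Sigma> m; M = CARD('m).\<close>
definition logjoint :: "nat \<Rightarrow> (nat \<Rightarrow> real) \<Rightarrow> (nat \<Rightarrow> real) \<Rightarrow> complex ^ 'm
     \<Rightarrow> nat \<Rightarrow> (nat \<Rightarrow> real) \<Rightarrow> (nat \<Rightarrow> real) \<Rightarrow> real \<Rightarrow> (nat \<Rightarrow> real) \<Rightarrow> real" where
  "logjoint N \<sigma> \<mu> y m \<theta> x \<delta>2 \<Sigma> =
     ln (1 / (2 * pi * \<Sigma> m) ^ CARD('m) * exp (- (norm y)\<^sup>2 / (2 * \<Sigma> m))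
         * PT N m \<theta> * ptheta N \<sigma> \<mu> x \<delta>2 \<theta>)"

definition Qtheta :: "nat \<Rightarrow> (nat \<Rightarrow> real \<Rightarrow> real) \<Rightarrow> (nat \<Rightarrow> real) measure" where
  "Qtheta N q = PiM {1..N} (\<lambda>n. density lborel (\<lambda>t. ennreal (indicator {0<..<1} t * q n t)))"

definition Mobj :: "nat \<Rightarrow> nat \<Rightarrow> (nat \<Rightarrow> real) \<Rightarrow> (nat \<Rightarrow> real) \<Rightarrow> (nat \<Rightarrow> complex ^ 'm)
     \<Rightarrow> (nat \<Rightarrow> nat \<Rightarrow> real) \<Rightarrow> (nat \<Rightarrow> nat \<Rightarrow> real \<Rightarrow> real)
     \<Rightarrow> (nat \<Rightarrow> real) \<Rightarrow> real \<Rightarrow> (nat \<Rightarrow> real) \<Rightarrow> real" where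
  "Mobj N L \<sigma> \<mu> y qT q x \<delta>2 \<Sigma> =
     (\<Sum>i = 1..L. \<Sum>m = 0..N. qT i m *
        (\<integral>\<theta>. logjoint N \<sigma> \<mu> (y i) m \<theta> x \<delta>2 \<Sigma> \<partial>Qtheta N (q i)))"

end

theory Submission
  imports Defs "HOL-Computational_Algebra.Polynomial"
begin

text \<open>
  P(m | \<theta>) is the probability of exactly m successes among independent Bernoulli(\<theta>_k)
  trials: the roots-of-unity sum extracts the coefficient of z^m from the generating function
  \<Prod>_k (1 - \<theta>_k + \<theta>_k z), which is positive when every \<theta>_k lies in (0,1). Since the
  factors q(\<theta>_n) live on (0,1), the logarithm of the joint density therefore splits almost surely
  into a parameter-free part plus
  -M ln \<Sigma>_m - \<parallel>y\<parallel>^2/(2\<Sigma>_m) - (N/2) ln \<delta>^2 - S(\<theta>,x)/(2\<delta>^2), with S the squared residual.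
  Differences of the M-step objective are thus differences of an explicit function of the
  parameters: a sum of terms -A ln s - B/s, each maximised at s = B/A because ln u \<le> u - 1,
  where the x-dependence enters only through B, a quadratic in each x_n minimised at x^*.
  The variance fit is ordinary least squares: its residuals are orthogonal to 1 and to m - N/2,
  so any other line adds a nonnegative sum of squares.
\<close>

section \<open>P(m | \<theta>) as a polynomial coefficient\<close>

lemma coeff_linear_mult:
  "coeff ([:a, b:] * p) j = a * coeff p j + (if j = 0 then 0 else b * coeff p (j - 1))"
  by (simp add: coeff_pCons' algebra_simps)

lemma coeff_prod_linear_of_real:
  fixes a b :: "'a \<Rightarrow> real"
  shows "coeff (\<Prod>k\<in>S. [:of_real (a k), of_real (b k):] :: 'b::{real_algebra_1,comm_ring_1} poly) j
       = of_real (coeff (\<Prod>k\<in>S. [:a k, b k:]) j)"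
proof (induction S arbitrary: j rule: infinite_finite_induct)
  case (insert k S)
  then show ?case by (simp only: prod.insert[OF insert.hyps] coeff_linear_mult) simp
qed simp_all

lemma coeff_prod_linear_pos:
  fixes a b :: "'a \<Rightarrow> real"
  assumes "finite S" and "\<forall>k\<in>S. 0 < a k \<and> 0 < b k"
  shows "0 \<le> coeff (\<Prod>k\<in>S. [:a k, b k:]) j \<and> (j \<le> card S \<longrightarrow> 0 < coeff (\<Prod>k\<in>S. [:a k, b k:]) j)"
  using assms
proof (induction S arbitrary: j rule: finite_induct)
  case empty
  then show ?case by (simp add: coeff_1)
next
  case (insert k S)
  let ?c = "coeff (\<Prod>k\<in>S. [:a k, b k:])"
  have ab: "0 < a k" "0 < b k" using insert.prems by auto
  have IH: "0 \<le> ?c i" "i \<le> card S \<Longrightarrow> 0 < ?c i" for i using insert by auto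
  have "j \<le> card S \<or> j = Suc (card S) \<or> Suc (card S) < j" by linarith
  then show ?case using ab IH[of j] IH[of "j - 1"]
    by (simp only: prod.insert[OF insert.hyps] coeff_linear_mult)
       (use insert.hyps in \<open>auto intro!: add_nonneg_nonneg add_pos_nonneg add_nonneg_pos\<close>)
qed

lemma croot_power_eq_1_iff: "croot N ^ k = 1 \<longleftrightarrow> (N + 1) dvd k"
proof -
  have "croot N ^ k = exp (2 * of_real pi * \<i> * of_nat k / of_nat (N + 1))"
    unfolding croot_def exp_of_nat_mult[symmetric] by (simp add: field_simps)
  then show ?thesis using complex_root_unity_eq_1[of "N + 1" k] by simp
qed

lemma sum_croot_powers:
  "(\<Sum>l = 0..N. croot N ^ (l * k)) = (if (N + 1) dvd k then of_nat (N + 1) else 0)"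
proof -
  define w where "w = croot N ^ k"
  have sum_eq: "(\<Sum>l = 0..N. croot N ^ (l * k)) = (\<Sum>l<N + 1. w ^ l)"
    unfolding w_def by (intro sum.cong) (auto simp: power_mult[symmetric] mult.commute)
  have "w ^ (N + 1) = (croot N ^ (N + 1)) ^ k"
    unfolding w_def by (simp only: power_mult[symmetric] mult.commute)
  then have "w ^ (N + 1) = 1" using croot_power_eq_1_iff[of N "N + 1"] by simp
  moreover have "w = 1 \<longleftrightarrow> (N + 1) dvd k" unfolding w_def by (rule croot_power_eq_1_iff)
  ultimately show ?thesis unfolding sum_eq sum_gp_strict by simp
qed

lemma sum_croot_filter:
  assumes "j \<le> N" "m \<le> N"
  shows "(\<Sum>l = 0..N. inverse (croot N) ^ (l * m) * (croot N ^ l) ^ j)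
       = (if j = m then of_nat (N + 1) else 0)"
proof -
  have "croot N * croot N ^ N = 1" using croot_power_eq_1_iff[of N "N + 1"] by simp
  then have inv: "inverse (croot N) = croot N ^ N" by (simp add: inverse_unique)
  have "inverse (croot N) ^ (l * m) * (croot N ^ l) ^ j = croot N ^ (l * (j + N * m))" for l
  proof -
    have "l * (j + N * m) = N * (l * m) + l * j" by (simp add: algebra_simps)
    then show ?thesis by (simp only: inv power_mult power_add)
  qed
  moreover have "(N + 1) dvd (j + N * m) \<longleftrightarrow> j = m"
  proof
    assume "(N + 1) dvd (j + N * m)"
    moreover have "int (j + N * m) = (int j - int m) + int (N + 1) * int m"
      by (simp add: algebra_simps)
    ultimately have "int (N + 1) dvd int j - int m"
      by (metis dvd_add_left_iff dvd_triv_left int_dvd_int_iff)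
    moreover have "\<bar>int j - int m\<bar> < int (N + 1)" using assms by simp
    ultimately have "int j - int m = 0"
      using dvd_imp_le_int[of "int j - int m" "int (N + 1)"] by linarith
    then show "j = m" by simp
  next
    assume "j = m"
    then have "j + N * m = (N + 1) * m" by simp
    then show "(N + 1) dvd (j + N * m)" by (metis dvd_triv_left)
  qed
  ultimately show ?thesis by (simp only: sum_croot_powers)
qed

lemma PT_eq_coeff:
  assumes "m \<le> N"
  shows "PT N m \<theta> = coeff (\<Prod>k = 1..N. [:1 - \<theta> k, \<theta> k:]) m"
proof -
  let ?P = "\<Prod>k = 1..N. [:of_real (1 - \<theta> k), of_real (\<theta> k):] :: complex poly"
  have "degree ?P \<le> (\<Sum>k = 1..N. degree [:complex_of_real (1 - \<theta> k), of_real (\<theta> k):])"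
    using degree_prod_sum_le[of "{1..N}"] unfolding o_def by blast
  also have "\<dots> \<le> (\<Sum>k = 1..N. 1)" by (rule sum_mono) simp
  finally have deg: "degree ?P \<le> N" by simp
  have expand: "(\<Prod>k = 1..N. 1 + (z - 1) * of_real (\<theta> k)) = (\<Sum>j\<le>N. coeff ?P j * z ^ j)" for z
  proof -
    have "(\<Prod>k = 1..N. 1 + (z - 1) * of_real (\<theta> k)) = poly ?P z"
      unfolding poly_prod by (intro prod.cong) (auto simp: algebra_simps)
    also have "\<dots> = (\<Sum>j\<le>N. coeff ?P j * z ^ j)"
      by (subst poly_as_sum_of_monoms'[OF deg, symmetric]) (simp add: poly_sum poly_monom)
    finally show ?thesis .
  qed
  have "(\<Sum>l = 0..N. inverse (croot N) ^ (l * m) *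
          (\<Prod>k = 1..N. 1 + (croot N ^ l - 1) * of_real (\<theta> k)))
      = (\<Sum>j\<le>N. coeff ?P j * (\<Sum>l = 0..N. inverse (croot N) ^ (l * m) * (croot N ^ l) ^ j))"
    unfolding expand sum_distrib_left by (subst sum.swap) (simp add: algebra_simps)
  also have "\<dots> = coeff ?P m * of_nat (N + 1)"
    using assms by (simp add: sum_croot_filter if_distrib sum.delta cong: if_cong del: of_nat_Suc)
  finally show ?thesis
    unfolding PT_def coeff_prod_linear_of_real by (simp del: of_nat_Suc)
qed

lemma PT_pos:
  assumes "m \<le> N" and "\<forall>k\<in>{1..N}. 0 < \<theta> k \<and> \<theta> k < 1"
  shows "0 < PT N m \<theta>"
  using coeff_prod_linear_pos[of "{1..N}" "\<lambda>k. 1 - \<theta> k" \<theta> m] assms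
  by (simp add: PT_eq_coeff)

section \<open>The mean-field measure on the unit cube\<close>

definition unit_density :: "(real \<Rightarrow> real) \<Rightarrow> real measure" where
  "unit_density f = density lborel (\<lambda>t. ennreal (indicator {0<..<1} t * f t))"

lemma sets_unit_density [simp]: "sets (unit_density f) = sets borel"
  unfolding unit_density_def by simp

lemma Qtheta_eq_PiM_unit_density: "Qtheta N q = PiM {1..N} (\<lambda>n. unit_density (q n))"
  unfolding Qtheta_def unit_density_def ..

lemma prob_space_unit_density:
  assumes [measurable]: "f \<in> borel_measurable borel"
    and "\<forall>t\<in>{0<..<1}. 0 \<le> f t" and "set_integrable lborel {0<..<1::real} f"
    and "(LINT t:{0<..<1}|lborel. f t) = 1"
  shows "prob_space (unit_density f)"
proof (rule prob_spaceI)
  have "emeasure (unit_density f) (space (unit_density f))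
      = (\<integral>\<^sup>+ t. ennreal (indicator {0<..<1} t * f t) \<partial>lborel)"
    unfolding unit_density_def by (subst emeasure_density) simp_all
  also have "\<dots> = ennreal (integral\<^sup>L lborel (\<lambda>t. indicator {0<..<1} t * f t))"
    using assms(2,3) unfolding set_integrable_def
    by (intro nn_integral_eq_integral) (auto simp: indicator_def)
  also have "\<dots> = ennreal (LINT t:{0<..<1}|lborel. f t)"
    unfolding set_lebesgue_integral_def by simp
  finally show "emeasure (unit_density f) (space (unit_density f)) = 1"
    using assms(4) by simp
qed

locale mean_field =
  fixes N :: nat and q :: "nat \<Rightarrow> real \<Rightarrow> real"
  assumes q_meas: "\<And>n. n \<in> {1..N} \<Longrightarrow> q n \<in> borel_measurable borel"
    and q_nonneg: "\<And>n t. n \<in> {1..N} \<Longrightarrow> t \<in> {0<..<1} \<Longrightarrow> 0 \<le> q n t"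
    and q_int: "\<And>n. n \<in> {1..N} \<Longrightarrow> set_integrable lborel {0<..<1::real} (q n)"
    and q_norm: "\<And>n. n \<in> {1..N} \<Longrightarrow> (LINT t:{0<..<1}|lborel. q n t) = 1"
begin

lemma prob_space_factor: "n \<in> {1..N} \<Longrightarrow> prob_space (unit_density (q n))"
  by (intro prob_space_unit_density q_meas q_int q_norm) (auto intro: q_nonneg)

lemma prob_space_Qtheta: "prob_space (Qtheta N q)"
  unfolding Qtheta_eq_PiM_unit_density by (rule prob_space_PiM) (rule prob_space_factor)

lemma distr_Qtheta_component:
  "n \<in> {1..N} \<Longrightarrow> distr (Qtheta N q) (unit_density (q n)) (\<lambda>\<theta>. \<theta> n) = unit_density (q n)"
  unfolding Qtheta_eq_PiM_unit_density by (rule distr_PiM_component) (auto intro: prob_space_factor)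

lemma measurable_Qtheta_component:
  "n \<in> {1..N} \<Longrightarrow> (\<lambda>\<theta>. \<theta> n) \<in> measurable (Qtheta N q) (unit_density (q n))"
  unfolding Qtheta_eq_PiM_unit_density by (rule measurable_component_singleton)

lemma
  assumes "n \<in> {1..N}" and [measurable]: "g \<in> borel_measurable borel"
  shows integrable_unit_density_iff: "integrable (unit_density (q n)) g \<longleftrightarrow> set_integrable lborel {0<..<1::real} (\<lambda>t. q n t * g t)"
    and integral_unit_density: "integral\<^sup>L (unit_density (q n)) g = (LINT t:{0<..<1}|lborel. q n t * g t)"
proof -
  have [measurable]: "q n \<in> borel_measurable borel" using assms(1) by (rule q_meas)
  have nonneg: "0 \<le> indicator {0<..<1::real} t * q n t" for t
    using q_nonneg[OF assms(1)] by (auto simp: indicator_def)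
  show "integrable (unit_density (q n)) g \<longleftrightarrow> set_integrable lborel {0<..<1::real} (\<lambda>t. q n t * g t)"
    unfolding unit_density_def set_integrable_def
    by (subst integrable_density) (simp_all add: nonneg mult.assoc)
  show "integral\<^sup>L (unit_density (q n)) g = (LINT t:{0<..<1}|lborel. q n t * g t)"
    unfolding unit_density_def set_lebesgue_integral_def
    by (subst integral_density) (simp_all add: nonneg mult.assoc)
qed

lemma
  assumes "n \<in> {1..N}" and g: "g \<in> borel_measurable borel"
  shows integrable_Qtheta_component_iff:
      "integrable (Qtheta N q) (\<lambda>\<theta>. g (\<theta> n)) \<longleftrightarrow> set_integrable lborel {0<..<1::real} (\<lambda>t. q n t * g t)"
    and integral_Qtheta_component:
      "(\<integral>\<theta>. g (\<theta> n) \<partial>Qtheta N q) = (LINT t:{0<..<1}|lborel. q n t * g t)"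
proof -
  have g': "g \<in> borel_measurable (unit_density (q n))"
    unfolding measurable_cong_sets[OF sets_unit_density refl] by (rule g)
  show "integrable (Qtheta N q) (\<lambda>\<theta>. g (\<theta> n)) \<longleftrightarrow> set_integrable lborel {0<..<1::real} (\<lambda>t. q n t * g t)"
    using integrable_distr_eq[OF measurable_Qtheta_component[OF assms(1)] g']
    by (simp add: distr_Qtheta_component[OF assms(1)] integrable_unit_density_iff[OF assms])
  show "(\<integral>\<theta>. g (\<theta> n) \<partial>Qtheta N q) = (LINT t:{0<..<1}|lborel. q n t * g t)"
    using integral_distr[OF measurable_Qtheta_component[OF assms(1)] g']
    by (simp add: distr_Qtheta_component[OF assms(1)] integral_unit_density[OF assms])
qed

lemma AE_Qtheta_unit_cube: "AE \<theta> in Qtheta N q. \<forall>n\<in>{1..N}. 0 < \<theta> n \<and> \<theta> n < 1"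
proof (intro eventually_ball_finite ballI)
  fix n assume n: "n \<in> {1..N}"
  have [measurable]: "q n \<in> borel_measurable borel" using n by (rule q_meas)
  have "AE t in unit_density (q n). 0 < t \<and> t < 1"
    unfolding unit_density_def by (subst AE_density) (auto simp: indicator_def)
  then show "AE \<theta> in Qtheta N q. 0 < \<theta> n \<and> \<theta> n < 1"
    unfolding Qtheta_eq_PiM_unit_density using n by (intro AE_PiM_component) (auto intro: prob_space_factor)
qed simp

end

section \<open>The log-joint density and its expectation\<close>

definition var_loglik :: "real \<Rightarrow> real \<Rightarrow> real \<Rightarrow> real" where
  "var_loglik A B s = - A * ln s - B / s"

lemma var_loglik_le_at_ratio:
  assumes A: "0 < A" and B: "0 < B" and s: "0 < s"
  shows "var_loglik A B s \<le> var_loglik A B (B / A)"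
proof -
  define u where "u = B / (A * s)"
  have u: "0 < u" unfolding u_def using A B s by simp
  have "var_loglik A B (B / A) - var_loglik A B s = A * (u - 1 - ln u)"
    using A B s by (simp add: var_loglik_def u_def ln_div ln_mult field_simps)
  moreover have "0 \<le> A * (u - 1 - ln u)" using A ln_le_minus_one[OF u] by simp
  ultimately show ?thesis by simp
qed

lemma var_loglik_antimono:
  "B \<le> B' \<Longrightarrow> 0 < s \<Longrightarrow> var_loglik A B' s \<le> var_loglik A B s"
  unfolding var_loglik_def by (simp add: divide_right_mono)

definition sq_residual ::
    "nat \<Rightarrow> (nat \<Rightarrow> real) \<Rightarrow> (nat \<Rightarrow> real) \<Rightarrow> (nat \<Rightarrow> real) \<Rightarrow> (nat \<Rightarrow> real) \<Rightarrow> real" where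
  "sq_residual N \<sigma> \<mu> x \<theta> = (\<Sum>n = 1..N. (- \<sigma> n * ln (1 / \<theta> n - 1) + \<mu> n - x n)\<^sup>2)"

definition logjoint_base :: "nat \<Rightarrow> nat \<Rightarrow> (nat \<Rightarrow> real) \<Rightarrow> nat \<Rightarrow> (nat \<Rightarrow> real) \<Rightarrow> real" where
  "logjoint_base N M \<sigma> m \<theta> = ln (PT N m \<theta>) + ln (\<Prod>n = 1..N. \<sigma> n / (\<theta> n - (\<theta> n)\<^sup>2))
     - real M * ln (2 * pi) - real N / 2 * ln (2 * pi)"

lemma logjoint_split:
  fixes y :: "complex ^ 'm"
  assumes \<sigma>: "\<forall>n\<in>{1..N}. 0 < \<sigma> n" and \<theta>: "\<forall>n\<in>{1..N}. 0 < \<theta> n \<and> \<theta> n < 1"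
    and m: "m \<le> N" and \<delta>2: "0 < \<delta>2" and \<Sigma>: "0 < \<Sigma> m"
  shows "logjoint N \<sigma> \<mu> y m \<theta> x \<delta>2 \<Sigma> = logjoint_base N CARD('m) \<sigma> m \<theta>
     + var_loglik CARD('m) ((norm y)\<^sup>2 / 2) (\<Sigma> m)
     + var_loglik (real N / 2) (sq_residual N \<sigma> \<mu> x \<theta> / 2) \<delta>2"
proof -
  define Pr where "Pr = (\<Prod>n = 1..N. \<sigma> n / (\<theta> n - (\<theta> n)\<^sup>2))"
  let ?S = "sq_residual N \<sigma> \<mu> x \<theta>"
  have Pr: "0 < Pr"
    unfolding Pr_def using \<sigma> \<theta> by (intro prod_pos) (auto simp: power2_eq_square)
  have PT: "0 < PT N m \<theta>" using m \<theta> by (rule PT_pos)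
  have "ln (ptheta N \<sigma> \<mu> x \<delta>2 \<theta>)
      = ln Pr - real N / 2 * ln (2 * pi) - real N / 2 * ln \<delta>2 - ?S / (2 * \<delta>2)"
    using Pr \<delta>2 unfolding ptheta_def sq_residual_def[symmetric] Pr_def[symmetric]
    by (simp add: ln_mult ln_div ln_realpow ln_sqrt ln_powr)
  moreover have "ln (1 / (2 * pi * \<Sigma> m) ^ CARD('m)) = - real CARD('m) * (ln (2 * pi) + ln (\<Sigma> m))"
    using \<Sigma> by (simp add: ln_div ln_realpow ln_mult)
  moreover have "logjoint N \<sigma> \<mu> y m \<theta> x \<delta>2 \<Sigma> = ln (1 / (2 * pi * \<Sigma> m) ^ CARD('m))
      - (norm y)\<^sup>2 / (2 * \<Sigma> m) + ln (PT N m \<theta>) + ln (ptheta N \<sigma> \<mu> x \<delta>2 \<theta>)"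
  proof -
    define a where "a = 1 / (2 * pi * \<Sigma> m) ^ CARD('m)"
    define e where "e = exp (- (norm y)\<^sup>2 / (2 * \<Sigma> m))"
    define pt where "pt = ptheta N \<sigma> \<mu> x \<delta>2 \<theta>"
    have "0 < a" "0 < e" "0 < pt"
      using Pr \<delta>2 \<Sigma> unfolding a_def e_def pt_def ptheta_def Pr_def[symmetric] by simp_all
    then have "ln (a * e * PT N m \<theta> * pt) = ln a + ln e + ln (PT N m \<theta>) + ln pt"
      using PT by (simp add: ln_mult)
    then show ?thesis unfolding logjoint_def a_def[symmetric] e_def[symmetric] pt_def[symmetric]
      by (simp add: e_def)
  qed
  ultimately show ?thesis
    unfolding logjoint_base_def var_loglik_def Pr_def[symmetric] by (simp add: algebra_simps)
qed

locale residual_slot = mean_field +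
  fixes \<sigma> \<mu> :: "nat \<Rightarrow> real"
  assumes \<sigma>_pos: "\<And>n. n \<in> {1..N} \<Longrightarrow> 0 < \<sigma> n"
    and ln_odds_int: "\<And>n. n \<in> {1..N} \<Longrightarrow>
      set_integrable lborel {0<..<1::real} (\<lambda>t. q n t * ln (1 / t - 1))"
    and ln_odds_sq_int: "\<And>n. n \<in> {1..N} \<Longrightarrow>
      set_integrable lborel {0<..<1::real} (\<lambda>t. q n t * (ln (1 / t - 1))\<^sup>2)"
begin

definition mean_ln_odds :: "nat \<Rightarrow> real" where
  "mean_ln_odds n = (LINT t:{0<..<1}|lborel. q n t * ln (1 / t - 1))"

definition mean_sq_ln_odds :: "nat \<Rightarrow> real" where
  "mean_sq_ln_odds n = (LINT t:{0<..<1}|lborel. q n t * (ln (1 / t - 1))\<^sup>2)"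

definition residual :: "nat \<Rightarrow> real \<Rightarrow> real" where
  "residual n c = (LINT t:{0<..<1}|lborel. q n t * (- \<sigma> n * ln (1 / t - 1) + \<mu> n - c)\<^sup>2)"

lemma residual_integrand_eq:
  "q n t * (- \<sigma> n * ln (1 / t - 1) + \<mu> n - c)\<^sup>2 =
   (\<sigma> n)\<^sup>2 * (q n t * (ln (1 / t - 1))\<^sup>2) - (2 * \<sigma> n * (\<mu> n - c)) * (q n t * ln (1 / t - 1))
   + (\<mu> n - c)\<^sup>2 * q n t"
  by (simp add: power2_eq_square algebra_simps)

lemma set_integrable_residual:
  "n \<in> {1..N} \<Longrightarrow>
   set_integrable lborel {0<..<1::real} (\<lambda>t. q n t * (- \<sigma> n * ln (1 / t - 1) + \<mu> n - c)\<^sup>2)"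
  unfolding residual_integrand_eq using ln_odds_int ln_odds_sq_int q_int
  by (intro set_integral_add set_integral_diff set_integrable_mult_right) auto

lemma residual_eq:
  assumes "n \<in> {1..N}"
  shows "residual n c
    = (\<sigma> n)\<^sup>2 * mean_sq_ln_odds n - 2 * \<sigma> n * (\<mu> n - c) * mean_ln_odds n + (\<mu> n - c)\<^sup>2"
  unfolding residual_def residual_integrand_eq mean_ln_odds_def mean_sq_ln_odds_def
  using ln_odds_int[OF assms] ln_odds_sq_int[OF assms] q_int[OF assms] q_norm[OF assms]
  by (simp add: set_integral_add set_integral_diff set_integrable_mult_right set_integral_mult_right)

lemma residual_nonneg: "n \<in> {1..N} \<Longrightarrow> 0 \<le> residual n c"
  unfolding residual_def set_lebesgue_integral_def
  by (intro Bochner_Integration.integral_nonneg) (auto simp: indicator_def q_nonneg)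

lemma residual_pos:
  assumes n: "n \<in> {1..N}"
  shows "0 < residual n c"
proof (rule ccontr)
  define r where "r t = indicator {0<..<1::real} t * (q n t * (- \<sigma> n * ln (1 / t - 1) + \<mu> n - c)\<^sup>2)" for t
  define t0 where "t0 = 1 / (1 + exp ((\<mu> n - c) / \<sigma> n))"
  have root: "t = t0" if "0 < t" "t < 1" "- \<sigma> n * ln (1 / t - 1) + \<mu> n - c = 0" for t
  proof -
    have "ln (1 / t - 1) = (\<mu> n - c) / \<sigma> n" using that(3) \<sigma>_pos[OF n] by (simp add: field_simps)
    moreover have "0 < 1 / t - 1" using that(1,2) by (simp add: field_simps)
    ultimately have "1 / t - 1 = exp ((\<mu> n - c) / \<sigma> n)" by (metis exp_ln)
    moreover have "0 < 1 + exp ((\<mu> n - c) / \<sigma> n)" by (simp add: add_pos_pos)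
    ultimately show ?thesis unfolding t0_def using that(1) by (simp add: field_simps)
  qed
  \<comment> \<open>the integrand vanishes at only one point of (0,1), so q n would vanish almost everywhere\<close>
  assume "\<not> 0 < residual n c"
  then have "integral\<^sup>L lborel r = 0"
    using residual_nonneg[OF n, of c] unfolding residual_def set_lebesgue_integral_def r_def by simp
  moreover have "integrable lborel r"
    using set_integrable_residual[OF n, of c] unfolding set_integrable_def r_def by simp
  moreover have "AE t in lborel. 0 \<le> r t"
    unfolding r_def using q_nonneg[OF n] by (intro AE_I2) (simp add: indicator_def)
  ultimately have "AE t in lborel. r t = 0" by (simp add: integral_nonneg_eq_0_iff_AE)
  then have "AE t in lborel. indicator {0<..<1::real} t * q n t = 0"
    using AE_lborel_singleton[of t0] by eventually_elim (auto simp: r_def indicator_def dest: root)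
  then have "(LINT t:{0<..<1}|lborel. q n t) = 0"
    unfolding set_lebesgue_integral_def by (simp add: integral_eq_zero_AE)
  then show False using q_norm[OF n] by simp
qed

lemma
  shows integrable_sq_residual: "integrable (Qtheta N q) (sq_residual N \<sigma> \<mu> x)"
    and integral_sq_residual: "(\<integral>\<theta>. sq_residual N \<sigma> \<mu> x \<theta> \<partial>Qtheta N q) = (\<Sum>n = 1..N. residual n (x n))"
proof -
  have meas: "(\<lambda>t::real. (- \<sigma> n * ln (1 / t - 1) + \<mu> n - x n)\<^sup>2) \<in> borel_measurable borel" for n
    by measurable
  have int: "integrable (Qtheta N q) (\<lambda>\<theta>. (- \<sigma> n * ln (1 / \<theta> n - 1) + \<mu> n - x n)\<^sup>2)"
    if "n \<in> {1..N}" for n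
    using integrable_Qtheta_component_iff[OF that meas] set_integrable_residual[OF that] by simp
  show "integrable (Qtheta N q) (sq_residual N \<sigma> \<mu> x)"
    unfolding sq_residual_def by (intro Bochner_Integration.integrable_sum int)
  show "(\<integral>\<theta>. sq_residual N \<sigma> \<mu> x \<theta> \<partial>Qtheta N q) = (\<Sum>n = 1..N. residual n (x n))"
    unfolding sq_residual_def residual_def
    by (subst Bochner_Integration.integral_sum[OF int])
       (assumption, intro sum.cong refl integral_Qtheta_component[OF _ meas])
qed

lemma
  shows integrable_var_loglik_sq_residual:
      "integrable (Qtheta N q) (\<lambda>\<theta>. var_loglik A (sq_residual N \<sigma> \<mu> x \<theta> / 2) d)"
    and integral_var_loglik_sq_residual:
      "(\<integral>\<theta>. var_loglik A (sq_residual N \<sigma> \<mu> x \<theta> / 2) d \<partial>Qtheta N q)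
        = var_loglik A ((\<Sum>n = 1..N. residual n (x n)) / 2) d"
proof -
  interpret Q: prob_space "Qtheta N q" by (rule prob_space_Qtheta)
  have eq: "var_loglik A (S / 2) d = - A * ln d - S / (2 * d)" for S
    unfolding var_loglik_def by simp
  show "integrable (Qtheta N q) (\<lambda>\<theta>. var_loglik A (sq_residual N \<sigma> \<mu> x \<theta> / 2) d)"
    unfolding eq using integrable_sq_residual by simp
  show "(\<integral>\<theta>. var_loglik A (sq_residual N \<sigma> \<mu> x \<theta> / 2) d \<partial>Qtheta N q)
        = var_loglik A ((\<Sum>n = 1..N. residual n (x n)) / 2) d"
    unfolding eq using integrable_sq_residual
    by (simp add: Bochner_Integration.integral_diff integral_sq_residual Q.prob_space)
qed

definition expected_loglik :: "real \<Rightarrow> real \<Rightarrow> nat \<Rightarrow> (nat \<Rightarrow> real) \<Rightarrow> real \<Rightarrow> (nat \<Rightarrow> real) \<Rightarrow> real" where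
  "expected_loglik M Y m x \<delta>2 \<Sigma> = var_loglik M (Y / 2) (\<Sigma> m)
     + var_loglik (real N / 2) ((\<Sum>n = 1..N. residual n (x n)) / 2) \<delta>2"

lemma integral_logjoint_diff:
  fixes y :: "complex ^ 'm"
  assumes m: "m \<le> N" and pos: "0 < \<delta>2" "0 < \<Sigma> m" "0 < \<delta>2'" "0 < \<Sigma>' m"
    and int: "integrable (Qtheta N q) (\<lambda>\<theta>. logjoint N \<sigma> \<mu> y m \<theta> x \<delta>2 \<Sigma>)"
      "integrable (Qtheta N q) (\<lambda>\<theta>. logjoint N \<sigma> \<mu> y m \<theta> x' \<delta>2' \<Sigma>')"
  shows "(\<integral>\<theta>. logjoint N \<sigma> \<mu> y m \<theta> x \<delta>2 \<Sigma> \<partial>Qtheta N q)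
       - (\<integral>\<theta>. logjoint N \<sigma> \<mu> y m \<theta> x' \<delta>2' \<Sigma>' \<partial>Qtheta N q)
     = expected_loglik CARD('m) ((norm y)\<^sup>2) m x \<delta>2 \<Sigma>
       - expected_loglik CARD('m) ((norm y)\<^sup>2) m x' \<delta>2' \<Sigma>'"
proof -
  define f where "f x \<delta>2 \<Sigma> \<theta> = var_loglik CARD('m) ((norm y)\<^sup>2 / 2) (\<Sigma> m)
    + var_loglik (real N / 2) (sq_residual N \<sigma> \<mu> x \<theta> / 2) \<delta>2" for x \<delta>2 \<Sigma> \<theta>
  have f_int: "integrable (Qtheta N q) (f x \<delta>2 \<Sigma>)"
    and f_integral: "integral\<^sup>L (Qtheta N q) (f x \<delta>2 \<Sigma>) = expected_loglik CARD('m) ((norm y)\<^sup>2) m x \<delta>2 \<Sigma>"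
    for x \<delta>2 \<Sigma>
  proof -
    interpret Q: prob_space "Qtheta N q" by (rule prob_space_Qtheta)
    show "integrable (Qtheta N q) (f x \<delta>2 \<Sigma>)"
      unfolding f_def by (intro Bochner_Integration.integrable_add integrable_var_loglik_sq_residual) simp
    show "integral\<^sup>L (Qtheta N q) (f x \<delta>2 \<Sigma>) = expected_loglik CARD('m) ((norm y)\<^sup>2) m x \<delta>2 \<Sigma>"
      unfolding f_def expected_loglik_def using integrable_var_loglik_sq_residual
      by (simp add: Bochner_Integration.integral_add integral_var_loglik_sq_residual Q.prob_space)
  qed
  \<comment> \<open>the parameter-free part of the log-joint cancels almost surely\<close>
  have "AE \<theta> in Qtheta N q. logjoint N \<sigma> \<mu> y m \<theta> x \<delta>2 \<Sigma> - f x \<delta>2 \<Sigma> \<theta>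
      = logjoint N \<sigma> \<mu> y m \<theta> x' \<delta>2' \<Sigma>' - f x' \<delta>2' \<Sigma>' \<theta>"
    using AE_Qtheta_unit_cube
  proof eventually_elim
    case (elim \<theta>)
    have \<sigma>: "\<forall>n\<in>{1..N}. 0 < \<sigma> n" using \<sigma>_pos by simp
    show ?case
      using logjoint_split[where \<Sigma> = \<Sigma> and y = y and x = x, OF \<sigma> elim m pos(1,2)]
        logjoint_split[where \<Sigma> = \<Sigma>' and y = y and x = x', OF \<sigma> elim m pos(3,4)]
      unfolding f_def by simp
  qed
  then have "integral\<^sup>L (Qtheta N q) (\<lambda>\<theta>. logjoint N \<sigma> \<mu> y m \<theta> x \<delta>2 \<Sigma> - f x \<delta>2 \<Sigma> \<theta>)
      = integral\<^sup>L (Qtheta N q) (\<lambda>\<theta>. logjoint N \<sigma> \<mu> y m \<theta> x' \<delta>2' \<Sigma>' - f x' \<delta>2' \<Sigma>' \<theta>)"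
    using int f_int by (intro integral_cong_AE borel_measurable_integrable Bochner_Integration.integrable_diff)
  then show ?thesis
    using int f_int by (simp add: Bochner_Integration.integral_diff f_integral)
qed

end

section \<open>The M-step\<close>

lemma quadratic_ge_vertex:
  fixes A K d :: real
  assumes "0 < A"
  shows "A * (K / A)\<^sup>2 - 2 * (K / A) * K \<le> A * d\<^sup>2 - 2 * d * K"
proof -
  have "A * d\<^sup>2 - 2 * d * K - (A * (K / A)\<^sup>2 - 2 * (K / A) * K) = (A * d - K)\<^sup>2 / A"
    using assms by (simp add: field_simps power2_eq_square)
  moreover have "0 \<le> (A * d - K)\<^sup>2 / A" using assms by simp
  ultimately show ?thesis by linarith
qed

lemma least_squares_line:
  fixes S :: "nat \<Rightarrow> real"
  assumes N: "1 \<le> N"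
  defines "Sbar \<equiv> (1 / real (N + 1)) * (\<Sum>m = 0..N. S m)"
  defines "sh \<equiv> (\<Sum>m = 0..N. (real m - real N / 2) * (S m - Sbar)) / (\<Sum>m = 0..N. (real m - real N / 2)\<^sup>2)"
  defines "sw \<equiv> Sbar - real N / 2 * sh"
  shows "(\<Sum>m = 0..N. (S m - (sw + real m * sh))\<^sup>2) \<le> (\<Sum>m = 0..N. (S m - (b + real m * a))\<^sup>2)"
proof -
  define D where "D = (\<Sum>m = 0..N. (real m - real N / 2)\<^sup>2)"
  define r where "r m = S m - (sw + real m * sh)" for m
  have "0 < D" unfolding D_def by (rule sum_pos2[of _ 0]) (use N in auto)
  have centered: "(\<Sum>m = 0..N. real m - real N / 2) = 0"
    using double_arith_series[of "- real N / 2" 1 N] by simp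
  have r_eq: "r m = (S m - Sbar) - (real m - real N / 2) * sh" for m
    unfolding r_def sw_def by (simp add: algebra_simps)
  have normal0: "(\<Sum>m = 0..N. r m) = 0"
  proof -
    have "(\<Sum>m = 0..N. r m) = (\<Sum>m = 0..N. S m - Sbar) - (\<Sum>m = 0..N. (real m - real N / 2) * sh)"
      unfolding r_eq by (rule sum_subtractf)
    also have "(\<Sum>m = 0..N. (real m - real N / 2) * sh) = (\<Sum>m = 0..N. real m - real N / 2) * sh"
      by (rule sum_distrib_right[symmetric])
    finally show ?thesis unfolding centered by (simp add: Sbar_def sum_subtractf del: of_nat_Suc)
  qed
  have normal1: "(\<Sum>m = 0..N. (real m - real N / 2) * r m) = 0"
  proof -
    have "(\<Sum>m = 0..N. (real m - real N / 2) * r m)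
        = (\<Sum>m = 0..N. (real m - real N / 2) * (S m - Sbar)) - sh * D"
      unfolding r_eq D_def right_diff_distrib sum_subtractf sum_distrib_left
      by (simp add: power2_eq_square mult_ac)
    then show ?thesis unfolding sh_def D_def[symmetric] using \<open>0 < D\<close> by simp
  qed
  define \<beta> where "\<beta> = sh - a"
  define \<alpha> where "\<alpha> = sw - b + real N / 2 * \<beta>"
  have split: "S m - (b + real m * a) = r m + (\<alpha> + (real m - real N / 2) * \<beta>)" for m
    unfolding r_def \<alpha>_def \<beta>_def by (simp add: algebra_simps)
  have pointwise: "(S m - (b + real m * a))\<^sup>2 = (r m)\<^sup>2 + 2 * \<alpha> * r m
      + 2 * \<beta> * ((real m - real N / 2) * r m) + (\<alpha> + (real m - real N / 2) * \<beta>)\<^sup>2" for m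
    unfolding split power2_eq_square by (simp add: algebra_simps)
  have "(\<Sum>m = 0..N. (S m - (b + real m * a))\<^sup>2) = (\<Sum>m = 0..N. (r m)\<^sup>2)
      + 2 * \<alpha> * (\<Sum>m = 0..N. r m) + 2 * \<beta> * (\<Sum>m = 0..N. (real m - real N / 2) * r m)
      + (\<Sum>m = 0..N. (\<alpha> + (real m - real N / 2) * \<beta>)\<^sup>2)"
    unfolding pointwise by (simp add: sum.distrib sum_distrib_left)
  also have "\<dots> \<ge> (\<Sum>m = 0..N. (r m)\<^sup>2)"
    unfolding normal0 normal1 by (simp add: sum_nonneg)
  finally show ?thesis unfolding r_def .
qed

locale m_step =
  fixes N L :: nat and y :: "nat \<Rightarrow> complex ^ 'm" and \<mu> \<sigma> :: "nat \<Rightarrow> real"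
    and qT :: "nat \<Rightarrow> nat \<Rightarrow> real" and q :: "nat \<Rightarrow> nat \<Rightarrow> real \<Rightarrow> real"
  assumes N: "1 \<le> N" and L: "1 \<le> L"
    and slot: "\<And>i. i \<in> {1..L} \<Longrightarrow> residual_slot N (q i) \<sigma>"
    and qT_nonneg: "\<And>i m. i \<in> {1..L} \<Longrightarrow> m \<in> {0..N} \<Longrightarrow> 0 \<le> qT i m"
    and qT_sum: "\<And>i. i \<in> {1..L} \<Longrightarrow> (\<Sum>m = 0..N. qT i m) = 1"
    and logjoint_integrable: "\<And>i m x \<delta>2 \<Sigma>. i \<in> {1..L} \<Longrightarrow> m \<in> {0..N} \<Longrightarrow> 0 < \<delta>2 \<Longrightarrow>
      \<forall>k\<in>{0..N}. 0 < \<Sigma> k \<Longrightarrow> integrable (Qtheta N (q i)) (\<lambda>\<theta>. logjoint N \<sigma> \<mu> (y i) m \<theta> x \<delta>2 \<Sigma>)"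
    and energy_pos: "\<And>m. m \<in> {0..N} \<Longrightarrow> 0 < (\<Sum>i = 1..L. qT i m * (norm (y i))\<^sup>2)"
begin

abbreviation residual :: "nat \<Rightarrow> nat \<Rightarrow> real \<Rightarrow> real" where
  "residual i \<equiv> residual_slot.residual (q i) \<sigma> \<mu>"

definition weight :: "nat \<Rightarrow> real" where
  "weight m = (\<Sum>i = 1..L. qT i m)"

definition energy :: "nat \<Rightarrow> real" where
  "energy m = (\<Sum>i = 1..L. qT i m * (norm (y i))\<^sup>2)"

definition total_residual :: "(nat \<Rightarrow> real) \<Rightarrow> real" where
  "total_residual x = (\<Sum>i = 1..L. \<Sum>n = 1..N. residual i n (x n))"

definition reduced_obj :: "(nat \<Rightarrow> real) \<Rightarrow> real \<Rightarrow> (nat \<Rightarrow> real) \<Rightarrow> real" where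
  "reduced_obj x \<delta>2 \<Sigma> = (\<Sum>m = 0..N. var_loglik (CARD('m) * weight m) (energy m / 2) (\<Sigma> m))
     + var_loglik (real L * real N / 2) (total_residual x / 2) \<delta>2"

definition x_opt :: "nat \<Rightarrow> real" where
  "x_opt = (\<lambda>n. \<mu> n - (1 / real L) *
     (\<Sum>i = 1..L. LINT t:{0<..<1}|lborel. q i n t * \<sigma> n * ln (1 / t - 1)))"

definition \<delta>_opt :: real where
  "\<delta>_opt = (1 / (real L * real N)) *
     (\<Sum>i = 1..L. \<Sum>n = 1..N. LINT t:{0<..<1}|lborel.
        q i n t * (- \<sigma> n * ln (1 / t - 1) + \<mu> n - x_opt n)\<^sup>2)"

definition \<Sigma>_opt :: "nat \<Rightarrow> real" where
  "\<Sigma>_opt = (\<lambda>m. (\<Sum>i = 1..L. qT i m * (norm (y i))\<^sup>2) /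
     (2 * real CARD('m) * (\<Sum>i = 1..L. qT i m)))"

lemma sum_expected_loglik:
  "(\<Sum>i = 1..L. \<Sum>m = 0..N. qT i m *
      residual_slot.expected_loglik N (q i) \<sigma> \<mu> CARD('m) ((norm (y i))\<^sup>2) m x \<delta>2 \<Sigma>)
   = reduced_obj x \<delta>2 \<Sigma>"
proof -
  have "(\<Sum>i = 1..L. \<Sum>m = 0..N. qT i m *
          residual_slot.expected_loglik N (q i) \<sigma> \<mu> CARD('m) ((norm (y i))\<^sup>2) m x \<delta>2 \<Sigma>)
      = (\<Sum>i = 1..L. \<Sum>m = 0..N. qT i m * var_loglik CARD('m) ((norm (y i))\<^sup>2 / 2) (\<Sigma> m))
        + (\<Sum>i = 1..L. (\<Sum>m = 0..N. qT i m) *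
            var_loglik (real N / 2) ((\<Sum>n = 1..N. residual i n (x n)) / 2) \<delta>2)"
    by (simp add: residual_slot.expected_loglik_def[OF slot] algebra_simps sum.distrib
        sum_distrib_right)
  also have "\<dots> = reduced_obj x \<delta>2 \<Sigma>"
    unfolding reduced_obj_def weight_def energy_def total_residual_def var_loglik_def
    by (subst sum.swap) (simp add: qT_sum sum_distrib_left sum_distrib_right sum_divide_distrib
        sum_subtractf sum_negf algebra_simps)
  finally show ?thesis .
qed

lemma Mobj_diff_eq:
  assumes "0 < \<delta>2" "\<forall>m\<in>{0..N}. 0 < \<Sigma> m" "0 < \<delta>2'" "\<forall>m\<in>{0..N}. 0 < \<Sigma>' m"
  shows "Mobj N L \<sigma> \<mu> y qT q x \<delta>2 \<Sigma> - Mobj N L \<sigma> \<mu> y qT q x' \<delta>2' \<Sigma>'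
       = reduced_obj x \<delta>2 \<Sigma> - reduced_obj x' \<delta>2' \<Sigma>'"
proof -
  have "Mobj N L \<sigma> \<mu> y qT q x \<delta>2 \<Sigma> - Mobj N L \<sigma> \<mu> y qT q x' \<delta>2' \<Sigma>'
      = (\<Sum>i = 1..L. \<Sum>m = 0..N. qT i m *
          (residual_slot.expected_loglik N (q i) \<sigma> \<mu> CARD('m) ((norm (y i))\<^sup>2) m x \<delta>2 \<Sigma>
           - residual_slot.expected_loglik N (q i) \<sigma> \<mu> CARD('m) ((norm (y i))\<^sup>2) m x' \<delta>2' \<Sigma>'))"
    unfolding Mobj_def sum_subtractf[symmetric] right_diff_distrib[symmetric] using assms
    by (intro sum.cong refl arg_cong[where f = "(*) _"] residual_slot.integral_logjoint_diff[OF slot]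
        logjoint_integrable) auto
  also have "\<dots> = reduced_obj x \<delta>2 \<Sigma> - reduced_obj x' \<delta>2' \<Sigma>'"
    unfolding sum_expected_loglik[symmetric] by (simp add: sum_subtractf right_diff_distrib)
  finally show ?thesis .
qed

lemma weight_pos:
  assumes m: "m \<in> {0..N}"
  shows "0 < weight m"
proof -
  have "0 \<le> weight m" unfolding weight_def using qT_nonneg m by (intro sum_nonneg) auto
  moreover have "weight m \<noteq> 0"
  proof
    assume "weight m = 0"
    then have "\<forall>i\<in>{1..L}. qT i m = 0"
      unfolding weight_def using qT_nonneg m by (subst (asm) sum_nonneg_eq_0_iff) auto
    then show False using energy_pos[OF m] by simp
  qed
  ultimately show ?thesis by simp
qed

lemma \<Sigma>_opt_eq: "\<Sigma>_opt m = (energy m / 2) / (CARD('m) * weight m)"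
  unfolding \<Sigma>_opt_def energy_def weight_def by simp

lemma \<Sigma>_opt_pos: "m \<in> {0..N} \<Longrightarrow> 0 < \<Sigma>_opt m"
  unfolding \<Sigma>_opt_eq using weight_pos energy_pos energy_def by simp

lemma x_opt_eq:
  "\<mu> n - x_opt n = \<sigma> n * (\<Sum>i = 1..L. residual_slot.mean_ln_odds (q i) n) / real L"
proof -
  have "(LINT t:{0<..<1}|lborel. q i n t * \<sigma> n * ln (1 / t - 1))
      = \<sigma> n * residual_slot.mean_ln_odds (q i) n" if "i \<in> {1..L}" for i
  proof -
    have "(LINT t:{0<..<1}|lborel. q i n t * \<sigma> n * ln (1 / t - 1))
        = (LINT t:{0<..<1}|lborel. \<sigma> n * (q i n t * ln (1 / t - 1)))"
      by (simp add: mult.commute mult.left_commute)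
    then show ?thesis
      unfolding residual_slot.mean_ln_odds_def[OF slot[OF that]] by (simp add: set_integral_mult_right)
  qed
  then show ?thesis unfolding x_opt_def by (simp add: sum_distrib_left sum_divide_distrib)
qed

lemma sum_residual_ge_x_opt:
  assumes n: "n \<in> {1..N}"
  shows "(\<Sum>i = 1..L. residual i n (x_opt n)) \<le> (\<Sum>i = 1..L. residual i n c)"
proof -
  define K where "K = \<sigma> n * (\<Sum>i = 1..L. residual_slot.mean_ln_odds (q i) n)"
  define C where "C = (\<Sum>i = 1..L. (\<sigma> n)\<^sup>2 * residual_slot.mean_sq_ln_odds (q i) n)"
  have sum_eq: "(\<Sum>i = 1..L. residual i n c') = C + (real L * (\<mu> n - c')\<^sup>2 - 2 * (\<mu> n - c') * K)"
    for c'
  proof -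
    have "(\<Sum>i = 1..L. residual i n c') = (\<Sum>i = 1..L. (\<sigma> n)\<^sup>2 * residual_slot.mean_sq_ln_odds (q i) n
        - 2 * \<sigma> n * (\<mu> n - c') * residual_slot.mean_ln_odds (q i) n + (\<mu> n - c')\<^sup>2)"
      by (intro sum.cong refl residual_slot.residual_eq[OF slot n])
    then show ?thesis
      unfolding C_def K_def by (simp add: sum.distrib sum_subtractf sum_distrib_left algebra_simps)
  qed
  have "\<mu> n - x_opt n = K / real L" unfolding K_def by (rule x_opt_eq)
  then show ?thesis
    unfolding sum_eq using quadratic_ge_vertex[of "real L" K "\<mu> n - c"] L by simp
qed

lemma total_residual_ge_x_opt: "total_residual x_opt \<le> total_residual x"
  unfolding total_residual_def
  by (subst (1 2) sum.swap) (intro sum_mono sum_residual_ge_x_opt)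

lemma total_residual_pos: "0 < total_residual x"
proof -
  have "1 \<in> {1..L}" "1 \<in> {1..N}" using L N by auto
  moreover have "0 \<le> residual i n c" if "i \<in> {1..L}" "n \<in> {1..N}" for i n c
    using residual_slot.residual_nonneg[OF slot] that by blast
  moreover have "0 < residual 1 1 c" for c
    using residual_slot.residual_pos[OF slot] calculation(1,2) by blast
  ultimately show ?thesis
    unfolding total_residual_def
    by (intro sum_pos2[of _ 1] sum_nonneg) (auto intro!: sum_pos2[of _ 1])
qed

lemma \<delta>_opt_eq: "\<delta>_opt = (total_residual x_opt / 2) / (real L * real N / 2)"
  unfolding \<delta>_opt_def total_residual_def
  by (simp add: residual_slot.residual_def[OF slot])

lemma \<delta>_opt_pos: "0 < \<delta>_opt"
  unfolding \<delta>_opt_eq using total_residual_pos L N by simp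

lemma reduced_obj_le_opt:
  assumes \<delta>2: "0 < \<delta>2" and \<Sigma>: "\<forall>m\<in>{0..N}. 0 < \<Sigma> m"
  shows "reduced_obj x \<delta>2 \<Sigma> \<le> reduced_obj x_opt \<delta>_opt \<Sigma>_opt"
proof -
  have "var_loglik (CARD('m) * weight m) (energy m / 2) (\<Sigma> m)
     \<le> var_loglik (CARD('m) * weight m) (energy m / 2) (\<Sigma>_opt m)" if "m \<in> {0..N}" for m
    unfolding \<Sigma>_opt_eq using that \<Sigma> weight_pos energy_pos energy_def
    by (intro var_loglik_le_at_ratio) auto
  moreover have "var_loglik (real L * real N / 2) (total_residual x / 2) \<delta>2
     \<le> var_loglik (real L * real N / 2) (total_residual x_opt / 2) \<delta>_opt"
    using total_residual_ge_x_opt[of x] total_residual_pos L N \<delta>2 unfolding \<delta>_opt_eq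
    by (intro order_trans[OF var_loglik_antimono var_loglik_le_at_ratio]) auto
  ultimately show ?thesis unfolding reduced_obj_def by (intro add_mono sum_mono) auto
qed

lemma Mobj_le_opt:
  assumes "0 < \<delta>2" and "\<forall>m\<in>{0..N}. 0 < \<Sigma> m"
  shows "Mobj N L \<sigma> \<mu> y qT q x \<delta>2 \<Sigma> \<le> Mobj N L \<sigma> \<mu> y qT q x_opt \<delta>_opt \<Sigma>_opt"
proof -
  have "\<forall>m\<in>{0..N}. 0 < \<Sigma>_opt m" using \<Sigma>_opt_pos by blast
  from Mobj_diff_eq[OF assms \<delta>_opt_pos this, of x x_opt] show ?thesis
    using reduced_obj_le_opt[OF assms, of x] by simp
qed

end

theorem mainTheorem7:
  fixes N L :: nat
    and y :: "nat \<Rightarrow> complex ^ 'm"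
    and \<mu> \<sigma> :: "nat \<Rightarrow> real"
    and qT :: "nat \<Rightarrow> nat \<Rightarrow> real"
    and q :: "nat \<Rightarrow> nat \<Rightarrow> real \<Rightarrow> real"
  assumes N: "N \<ge> 1" and L: "L \<ge> 1"
    and \<sigma>_pos: "\<forall>n\<in>{1..N}. \<sigma> n > 0"
    and qT_nonneg: "\<forall>i\<in>{1..L}. \<forall>m\<in>{0..N}. qT i m \<ge> 0"
    and qT_sum: "\<forall>i\<in>{1..L}. (\<Sum>m = 0..N. qT i m) = 1"
    and q_meas: "\<forall>i\<in>{1..L}. \<forall>n\<in>{1..N}. q i n \<in> borel_measurable borel"
    and q_nonneg: "\<forall>i\<in>{1..L}. \<forall>n\<in>{1..N}. \<forall>t\<in>{0<..<1}. q i n t \<ge> 0"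
    and q_int: "\<forall>i\<in>{1..L}. \<forall>n\<in>{1..N}. set_integrable lborel {0<..<1::real} (q i n)"
    and q_norm: "\<forall>i\<in>{1..L}. \<forall>n\<in>{1..N}. (LINT t:{0<..<1}|lborel. q i n t) = 1"
    and fin1: "\<forall>i\<in>{1..L}. \<forall>n\<in>{1..N}.
        set_integrable lborel {0<..<1::real} (\<lambda>t. q i n t * ln (1 / t - 1))"
    and fin2: "\<forall>i\<in>{1..L}. \<forall>n\<in>{1..N}.
        set_integrable lborel {0<..<1::real} (\<lambda>t. q i n t * (ln (1 / t - 1))\<^sup>2)"
    and fin_joint: "\<forall>i\<in>{1..L}. \<forall>m\<in>{0..N}. \<forall>x \<delta>2 \<Sigma>. \<delta>2 > 0 \<longrightarrow> (\<forall>k\<in>{0..N}. \<Sigma> k > 0) \<longrightarrow>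
        integrable (Qtheta N (q i)) (\<lambda>\<theta>. logjoint N \<sigma> \<mu> (y i) m \<theta> x \<delta>2 \<Sigma>)"
    and y_pos: "\<forall>m\<in>{0..N}. (\<Sum>i = 1..L. qT i m * (norm (y i))\<^sup>2) > 0"
  shows "let
      xs = (\<lambda>n. \<mu> n - (1 / real L) *
              (\<Sum>i = 1..L. LINT t:{0<..<1}|lborel. q i n t * \<sigma> n * ln (1 / t - 1)));
      \<delta>s = (1 / (real L * real N)) *
              (\<Sum>i = 1..L. \<Sum>n = 1..N. LINT t:{0<..<1}|lborel.
                 q i n t * (- \<sigma> n * ln (1 / t - 1) + \<mu> n - xs n)\<^sup>2);
      \<Sigma>s = (\<lambda>m. (\<Sum>i = 1..L. qT i m * (norm (y i))\<^sup>2) /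
              (2 * real CARD('m) * (\<Sum>i = 1..L. qT i m)));
      \<Sigma>bar = (1 / real (N + 1)) * (\<Sum>m = 0..N. \<Sigma>s m);
      sh = (\<Sum>m = 0..N. (real m - real N / 2) * (\<Sigma>s m - \<Sigma>bar)) /
           (\<Sum>m = 0..N. (real m - real N / 2)\<^sup>2);
      sw = \<Sigma>bar - real N / 2 * sh
    in \<delta>s > 0 \<and> (\<forall>m\<in>{0..N}. \<Sigma>s m > 0) \<and>
       (\<forall>x \<delta>2 \<Sigma>. \<delta>2 > 0 \<longrightarrow> (\<forall>m\<in>{0..N}. \<Sigma> m > 0) \<longrightarrow>
          Mobj N L \<sigma> \<mu> y qT q x \<delta>2 \<Sigma> \<le> Mobj N L \<sigma> \<mu> y qT q xs \<delta>s \<Sigma>s) \<and>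
       (\<forall>a b :: real. (\<Sum>m = 0..N. (\<Sigma>s m - (b + real m * a))\<^sup>2)
          \<ge> (\<Sum>m = 0..N. (\<Sigma>s m - (sw + real m * sh))\<^sup>2))"
proof -
  have slot: "residual_slot N (q i) \<sigma>" if "i \<in> {1..L}" for i
    using that \<sigma>_pos q_meas q_nonneg q_int q_norm fin1 fin2 by unfold_locales auto
  interpret m_step N L y \<mu> \<sigma> qT q
    using N L slot qT_nonneg qT_sum fin_joint y_pos by (intro m_step.intro) auto
  have "\<forall>x \<delta>2 \<Sigma>. \<delta>2 > 0 \<longrightarrow> (\<forall>m\<in>{0..N}. \<Sigma> m > 0) \<longrightarrow>
      Mobj N L \<sigma> \<mu> y qT q x \<delta>2 \<Sigma> \<le> Mobj N L \<sigma> \<mu> y qT q x_opt \<delta>_opt \<Sigma>_opt"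
    using Mobj_le_opt by blast
  with \<delta>_opt_pos \<Sigma>_opt_pos least_squares_line[OF N, of \<Sigma>_opt] show ?thesis
    unfolding Let_def x_opt_def \<delta>_opt_def \<Sigma>_opt_def by auto
qed

end
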